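(* Let $a,b,q$ be complex numbers with $q\ne0$, and define $B_{n,k}(a,b)$ ($n\ge k\ge0$) by $$z^k=\sum_{n=k}^\infty B_{n,k}(a,b)\,z^n\frac{(az;q)_n}{(bz;q)_n}\qquad(k\ge0)$$ in $\mathbb{C}[[z]]$. Put $G_k(z):=\sum_{n=k}^\infty B_{n,k}(a,b)z^n$ and $G(y,z):=\sum_{k=0}^\infty G_k(z)y^k$. Then, as formal power series in $z$ (with coefficients rational functions of $y$), $$G(y,z)=\sum_{n=0}^\infty\frac{(b/y;q)_n}{(a/y;q)_n}(yz)^n+\sum_{n=0}^\infty\big(bzq^n-aG_1(zq^n)\big)\frac{(b/y;q)_n}{(a/y;q)_{n+1}}(yz)^n.$$
   Context: $(x;q)_n=\prod_{j=0}^{n-1}(1-xq^j)$ for $n\ge0$, $(x;q)_0=1$. The family $\{z^n(az;q)_n/(bz;q)_n\}_{n\ge0}$ is a basis of $\mathbb{C}[[z]]$ in the formal sense, so the $B_{n,k}(a,b)$ are uniquely determined. *)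

theory Defs
  imports "HOL-Computational_Algebra.Formal_Power_Series"
begin

definition qpoch :: "complex \<Rightarrow> complex \<Rightarrow> nat \<Rightarrow> complex" where
  "qpoch x q n = (\<Prod>j<n. 1 - x * q ^ j)"

definition qpoch_fps :: "complex \<Rightarrow> complex \<Rightarrow> nat \<Rightarrow> complex fps" where
  "qpoch_fps c q n = (\<Prod>j<n. 1 - fps_const (c * q ^ j) * fps_X)"

definition qbasis :: "complex \<Rightarrow> complex \<Rightarrow> complex \<Rightarrow> nat \<Rightarrow> complex fps" where
  "qbasis a b q n = fps_X ^ n * qpoch_fps a q n * inverse (qpoch_fps b q n)"

definition fps_scale :: "complex \<Rightarrow> complex fps \<Rightarrow> complex fps" where
  "fps_scale c f = Abs_fps (\<lambda>m. c ^ m * fps_nth f m)"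

end

theory Submission
  imports Defs
begin

(* Let L f = \<Sum>n f_n \<phi>_n, where \<phi>_n = z^n (az;q)_n/(bz;q)_n, be the expansion map
   (qbasis_series below); the hypothesis on B says L G_k = z^k.  L is injective because the
   basis is triangular, it commutes with the locally finite sums used here, and the basis satisfies
   q^n (1 - bz) \<phi>_{n+1}(z) = z (1 - az) \<phi>_n(qz).
   Applying L to G(y,z) = \<Sum>k y^k G_k(z) gives 1/(1 - yz), and comparing images under L yields
     (y - a) G(y,z) = (y - a) + y S(z) + (y - b) y z G(y/q, qz),   S(z) = bz - a G_1(z).
   The right-hand side satisfies the same q-difference equation term by term, since
   (y - a) (b/y;q)_{n+1}/(a/y;q)_{m+1} = (y - b) (b/(y/q);q)_n/(a/(y/q);q)_m.
   Read coefficientwise in z, the equation determines the coefficient of z^m at y from that of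
   z^(m-1) at y/q, so for y outside {0} \<union> {a q^j} it has only one solution. *)

unbundle fps_syntax

text \<open>Power series carry a metric but no topological monoid structure, so infinite sums are
  handled through families whose \<open>k\<close>-th member has order at least \<open>k\<close>: their series converge
  and each coefficient of the sum is a finite sum.\<close>

definition order_ge_index :: "(nat \<Rightarrow> 'a::zero fps) \<Rightarrow> bool" where
  "order_ge_index F \<longleftrightarrow> (\<forall>k m. m < k \<longrightarrow> F k $ m = 0)"

lemma order_ge_indexD: "order_ge_index F \<Longrightarrow> m < k \<Longrightarrow> F k $ m = 0"
  by (simp add: order_ge_index_def)

lemma order_ge_index_mult_X_power: "order_ge_index (\<lambda>k. F k * fps_X ^ k :: 'a::comm_ring_1 fps)"
  by (simp add: order_ge_index_def fps_X_power_mult_right_nth)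

lemma order_ge_index_mult_left:
  "order_ge_index F \<Longrightarrow> order_ge_index (\<lambda>k. h k * F k :: 'a::comm_ring_1 fps)"
  by (auto simp: order_ge_index_def fps_mult_nth intro!: sum.neutral)

lemma order_ge_index_Suc: "order_ge_index F \<Longrightarrow> order_ge_index (\<lambda>k. F (Suc k))"
  by (simp add: order_ge_index_def)

lemma sums_order_ge_index:
  fixes F :: "nat \<Rightarrow> 'a::comm_ring_1 fps"
  assumes "order_ge_index F"
  shows "F sums Abs_fps (\<lambda>m. \<Sum>k\<le>m. F k $ m)"
  unfolding sums_def
proof (rule tendsto_fpsI)
  fix m
  have "(\<Sum>k<N. F k) $ m = (\<Sum>k\<le>m. F k $ m)" if "m < N" for N
    unfolding fps_sum_nth using that order_ge_indexD[OF assms]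
    by (intro sum.mono_neutral_right) auto
  then show "\<forall>\<^sub>F N in sequentially.
      (\<Sum>k<N. F k) $ m = Abs_fps (\<lambda>m. \<Sum>k\<le>m. F k $ m) $ m"
    by (auto intro: eventually_sequentiallyI[of "Suc m"])
qed

lemma fps_suminf_nth:
  fixes F :: "nat \<Rightarrow> 'a::comm_ring_1 fps"
  assumes "order_ge_index F"
  shows "suminf F $ m = (\<Sum>k\<le>m. F k $ m)"
proof -
  have "suminf F = Abs_fps (\<lambda>m. \<Sum>k\<le>m. F k $ m)"
    by (rule sums_unique[OF sums_order_ge_index[OF assms], symmetric])
  then show ?thesis by simp
qed

lemma fps_suminf_split_head:
  fixes F :: "nat \<Rightarrow> 'a::comm_ring_1 fps"
  assumes F: "order_ge_index F"
  shows "suminf F = F 0 + (\<Sum>k. F (Suc k))"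
proof (rule fps_ext)
  fix m
  have "(\<Sum>k\<le>m. F k $ m) = F 0 $ m + (\<Sum>k<m. F (Suc k) $ m)"
    unfolding lessThan_Suc_atMost[symmetric] sum.lessThan_Suc_shift by simp
  moreover have "(\<Sum>k\<le>m. F (Suc k) $ m) = (\<Sum>k<m. F (Suc k) $ m)"
    using order_ge_indexD[OF F, of m "Suc m"] by (simp add: lessThan_Suc_atMost[symmetric])
  ultimately show "suminf F $ m = (F 0 + (\<Sum>k. F (Suc k))) $ m"
    by (simp add: fps_suminf_nth F order_ge_index_Suc)
qed

lemma fps_mult_suminf:
  fixes F :: "nat \<Rightarrow> 'a::comm_ring_1 fps"
  assumes F: "order_ge_index F"
  shows "h * suminf F = (\<Sum>k. h * F k)"
proof (rule fps_ext)
  fix m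
  have "(\<Sum>k\<le>i. F k $ i) = (\<Sum>k\<le>m. F k $ i)" if "i \<le> m" for i
    using that order_ge_indexD[OF F] by (intro sum.mono_neutral_left) auto
  then have "(h * suminf F) $ m = (\<Sum>i=0..m. \<Sum>k\<le>m. h $ i * F k $ (m - i))"
    by (simp add: fps_mult_nth fps_suminf_nth[OF F] sum_distrib_left)
  also have "\<dots> = (\<Sum>k\<le>m. (h * F k) $ m)"
    by (simp add: fps_mult_nth sum.swap[of _ "{0..m}"])
  finally show "(h * suminf F) $ m = (\<Sum>k. h * F k) $ m"
    by (simp add: fps_suminf_nth order_ge_index_mult_left F)
qed

lemma fps_scale_conv_compose: "fps_scale c f = f oo (fps_const c * fps_X)"
  by (simp add: fps_scale_def fps_compose_linear)

lemma fps_scale_nth [simp]: "fps_scale c f $ n = c ^ n * f $ n"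
  by (simp add: fps_scale_def)

lemma fps_scale_add [simp]: "fps_scale c (f + g) = fps_scale c f + fps_scale c g"
  by (simp add: fps_eq_iff algebra_simps)

lemma fps_scale_diff [simp]: "fps_scale c (f - g) = fps_scale c f - fps_scale c g"
  by (simp add: fps_eq_iff algebra_simps)

lemma fps_scale_mult [simp]: "fps_scale c (f * g) = fps_scale c f * fps_scale c g"
  by (simp add: fps_scale_conv_compose fps_compose_mult_distrib)

lemma fps_scale_const [simp]: "fps_scale c (fps_const d) = fps_const d"
  by (simp add: fps_scale_conv_compose)

lemma fps_scale_one [simp]: "fps_scale c 1 = 1"
  by (simp add: fps_scale_conv_compose)

lemma fps_scale_1 [simp]: "fps_scale 1 f = f"
  by (simp add: fps_eq_iff)

lemma fps_scale_X [simp]: "fps_scale c fps_X = fps_const c * fps_X"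
  by (simp add: fps_scale_conv_compose)

lemma fps_scale_X_power [simp]: "fps_scale c (fps_X ^ n) = fps_const (c ^ n) * fps_X ^ n"
  by (simp add: fps_eq_iff)

lemma fps_scale_inverse: "f $ 0 \<noteq> 0 \<Longrightarrow> fps_scale c (inverse f) = inverse (fps_scale c f)"
  by (simp add: fps_scale_conv_compose fps_inverse_compose)

lemma fps_scale_scale: "fps_scale c (fps_scale d f) = fps_scale (c * d) f"
  by (simp add: fps_eq_iff power_mult_distrib)

lemma order_ge_index_fps_scale: "order_ge_index F \<Longrightarrow> order_ge_index (\<lambda>k. fps_scale c (F k))"
  by (simp add: order_ge_index_def fps_scale_def)

lemma fps_scale_suminf:
  assumes F: "order_ge_index F"
  shows "fps_scale c (suminf F) = (\<Sum>k. fps_scale c (F k))"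
  by (simp add: fps_eq_iff fps_suminf_nth F order_ge_index_fps_scale sum_distrib_left)

lemma fps_scale_monomial_step:
  assumes "c * d = e * (f * q ^ n)"
  shows "fps_const c * (fps_scale q P * fps_const d * fps_X ^ Suc n)
       = fps_const e * fps_X * fps_scale q (P * fps_const f * fps_X ^ n)"
proof -
  have "fps_const c * (fps_scale q P * fps_const d * fps_X ^ Suc n)
      = fps_scale q P * fps_X ^ Suc n * fps_const (c * d)"
    by (simp only: fps_const_mult[symmetric] mult_ac)
  also have "\<dots> = fps_scale q P * fps_X ^ Suc n * fps_const (e * (f * q ^ n))"
    by (simp only: assms)
  also have "\<dots> = fps_const e * fps_X * fps_scale q (P * fps_const f * fps_X ^ n)"
    by (simp only: fps_scale_mult fps_scale_const fps_scale_X_power fps_const_mult[symmetric]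
        power_Suc mult_ac)
  finally show ?thesis .
qed

lemma fps_suminf_q_difference:
  assumes F: "order_ge_index F" and H: "order_ge_index H"
    and step: "\<And>n. g * F (Suc n) = h * fps_scale q (H n)"
  shows "g * suminf F = g * F 0 + h * fps_scale q (suminf H)"
proof -
  have "g * suminf F = g * F 0 + (\<Sum>n. g * F (Suc n))"
    by (simp add: fps_suminf_split_head[OF F] distrib_left fps_mult_suminf order_ge_index_Suc F)
  also have "(\<Sum>n. g * F (Suc n)) = h * fps_scale q (suminf H)"
    by (simp add: step fps_scale_suminf H fps_mult_suminf order_ge_index_fps_scale)
  finally show ?thesis .
qed

lemma fps_geometric_suminf:
  "(1 - fps_const c * fps_X) * (\<Sum>k. fps_const (c ^ k) * fps_X ^ k) = (1 :: 'a::comm_ring_1 fps)"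
proof -
  have "(\<Sum>k. fps_const (c ^ k) * fps_X ^ k) = Abs_fps (\<lambda>n. c ^ n :: 'a)"
    by (simp add: fps_eq_iff fps_suminf_nth order_ge_index_mult_X_power mult_delta_right)
  then show ?thesis
    by (simp add: fps_eq_iff algebra_simps flip: power_Suc)
qed

lemma qpoch_fps_nth_0 [simp]: "qpoch_fps c q n $ 0 = 1"
  by (induction n) (simp_all add: qpoch_fps_def)

lemma qpoch_fps_Suc: "qpoch_fps c q (Suc n) = (1 - fps_const c * fps_X) * qpoch_fps (c * q) q n"
  unfolding qpoch_fps_def prod.lessThan_Suc_shift by (simp add: mult.assoc)

lemma fps_scale_qpoch_fps: "fps_scale d (qpoch_fps c q n) = qpoch_fps (c * d) q n"
  unfolding qpoch_fps_def fps_scale_conv_compose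
  by (simp add: fps_compose_prod_distrib fps_compose_sub_distrib fps_compose_mult_distrib mult_ac
           flip: fps_const_mult)

lemma qbasis_nth_less: "m < n \<Longrightarrow> qbasis a b q n $ m = 0"
  unfolding qbasis_def by (simp add: mult.assoc fps_X_power_mult_nth)

lemma qbasis_nth_self: "qbasis a b q n $ n = 1"
  unfolding qbasis_def by (simp add: mult.assoc fps_X_power_mult_nth)

lemma qbasis_0 [simp]: "qbasis a b q 0 = 1"
  by (simp add: qbasis_def qpoch_fps_def)

lemma qbasis_Suc_shift:
  "fps_const (q ^ n) * (1 - fps_const b * fps_X) * qbasis a b q (Suc n)
     = fps_X * (1 - fps_const a * fps_X) * fps_scale q (qbasis a b q n)"
proof -
  have "(1 - fps_const b * fps_X) * inverse (1 - fps_const b * fps_X) = (1 :: complex fps)"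
    by (simp add: inverse_mult_eq_1')
  then show ?thesis
    unfolding qbasis_def qpoch_fps_Suc fps_inverse_mult
    by (simp add: fps_scale_inverse fps_scale_qpoch_fps)
qed

definition qbasis_series :: "complex \<Rightarrow> complex \<Rightarrow> complex \<Rightarrow> complex fps \<Rightarrow> complex fps" where
  "qbasis_series a b q f = (\<Sum>n. fps_const (f $ n) * qbasis a b q n)"

lemma order_ge_index_qbasis: "order_ge_index (\<lambda>n. fps_const (c n) * qbasis a b q n)"
  by (simp add: order_ge_index_def qbasis_nth_less)

lemma qbasis_series_nth: "qbasis_series a b q f $ m = (\<Sum>n\<le>m. f $ n * qbasis a b q n $ m)"
  by (simp add: qbasis_series_def fps_suminf_nth order_ge_index_qbasis)

lemma qbasis_series_add:
  "qbasis_series a b q (f + g) = qbasis_series a b q f + qbasis_series a b q g"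
  by (simp add: fps_eq_iff qbasis_series_nth algebra_simps sum.distrib)

lemma qbasis_series_diff:
  "qbasis_series a b q (f - g) = qbasis_series a b q f - qbasis_series a b q g"
  by (simp add: fps_eq_iff qbasis_series_nth algebra_simps sum_subtractf)

lemma qbasis_series_const_mult:
  "qbasis_series a b q (fps_const c * f) = fps_const c * qbasis_series a b q f"
  by (simp add: fps_eq_iff qbasis_series_nth sum_distrib_left mult.assoc)

lemma qbasis_series_1 [simp]: "qbasis_series a b q 1 = 1"
  by (simp add: fps_eq_iff qbasis_series_nth atMost_atLeast0 sum.atLeast_Suc_atMost)

lemma qbasis_series_const [simp]: "qbasis_series a b q (fps_const c) = fps_const c"
  using qbasis_series_const_mult[of a b q c 1] by simp

lemma qbasis_series_triangular:
  assumes "\<And>m. fps_X ^ k $ m = (\<Sum>n\<in>{k..m}. c n * qbasis a b q n $ m)"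
  shows "qbasis_series a b q (Abs_fps (\<lambda>n. if k \<le> n then c n else 0)) = fps_X ^ k"
proof (rule fps_ext)
  fix m
  have "qbasis_series a b q (Abs_fps (\<lambda>n. if k \<le> n then c n else 0)) $ m
      = (\<Sum>n\<le>m. (if k \<le> n then c n else 0) * qbasis a b q n $ m)"
    by (simp add: qbasis_series_nth)
  also have "\<dots> = (\<Sum>n\<in>{k..m}. c n * qbasis a b q n $ m)"
    by (intro sum.mono_neutral_cong_right) auto
  also have "\<dots> = fps_X ^ k $ m"
    by (rule assms[symmetric])
  finally show "qbasis_series a b q (Abs_fps (\<lambda>n. if k \<le> n then c n else 0)) $ m
      = fps_X ^ k $ m" .
qed

lemma qbasis_series_nth_eq_0:
  assumes "\<And>j. j \<le> i \<Longrightarrow> qbasis_series a b q f $ j = 0"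
  shows "f $ i = 0"
  using assms
proof (induction i rule: less_induct)
  case (less i)
  have below: "f $ n = 0" if "n < i" for n
    using less.IH[OF that] less.prems that by simp
  have "qbasis_series a b q f $ i = f $ i"
    unfolding qbasis_series_nth
    by (subst sum.mono_neutral_right[of "{..i}" "{i}"]) (auto simp: below qbasis_nth_self)
  then show ?case using less.prems by simp
qed

lemma qbasis_series_inject:
  "qbasis_series a b q f = qbasis_series a b q g \<longleftrightarrow> f = g"
proof
  assume eq: "qbasis_series a b q f = qbasis_series a b q g"
  have "(f - g) $ n = 0" for n
    by (rule qbasis_series_nth_eq_0[where a = a and b = b and q = q])
       (simp add: qbasis_series_diff eq)
  then show "f = g" by (simp add: fps_eq_iff)
qed simp

lemma order_ge_index_qbasis_series:
  "order_ge_index F \<Longrightarrow> order_ge_index (\<lambda>k. qbasis_series a b q (F k))"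
  by (auto simp: order_ge_index_def qbasis_series_nth intro!: sum.neutral)

lemma qbasis_series_suminf:
  assumes F: "order_ge_index F"
  shows "qbasis_series a b q (suminf F) = (\<Sum>k. qbasis_series a b q (F k))"
proof (rule fps_ext)
  fix m
  have "(\<Sum>k\<le>n. F k $ n) = (\<Sum>k\<le>m. F k $ n)" if "n \<le> m" for n
    using that order_ge_indexD[OF F] by (intro sum.mono_neutral_left) auto
  then have "qbasis_series a b q (suminf F) $ m
      = (\<Sum>n\<le>m. \<Sum>k\<le>m. F k $ n * qbasis a b q n $ m)"
    by (simp add: qbasis_series_nth fps_suminf_nth F sum_distrib_right)
  also have "\<dots> = (\<Sum>k\<le>m. qbasis_series a b q (F k) $ m)"
    unfolding qbasis_series_nth by (rule sum.swap)
  finally show "qbasis_series a b q (suminf F) $ m = (\<Sum>k. qbasis_series a b q (F k)) $ m"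
    by (simp add: fps_suminf_nth order_ge_index_qbasis_series F)
qed

lemma qbasis_series_shift:
  "(1 - fps_const b * fps_X) * qbasis_series a b q (fps_X * fps_scale q f)
     = fps_X * (1 - fps_const a * fps_X) * fps_scale q (qbasis_series a b q f)"
proof -
  have shifted: "order_ge_index (\<lambda>n. fps_const (c n) * qbasis a b q (Suc n))" for c
    by (simp add: order_ge_index_def qbasis_nth_less)
  have "qbasis_series a b q (fps_X * fps_scale q f)
      = (\<Sum>n. fps_const (q ^ n * f $ n) * qbasis a b q (Suc n))"
    unfolding qbasis_series_def
    by (subst fps_suminf_split_head) (simp_all add: order_ge_index_qbasis)
  also have "(1 - fps_const b * fps_X) * \<dots>
      = (\<Sum>n. fps_const (f $ n)
             * (fps_const (q ^ n) * (1 - fps_const b * fps_X) * qbasis a b q (Suc n)))"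
    by (subst fps_mult_suminf[OF shifted]) (simp add: mult_ac flip: fps_const_mult)
  also have "\<dots> = (\<Sum>n. fps_const (f $ n)
             * (fps_X * (1 - fps_const a * fps_X) * fps_scale q (qbasis a b q n)))"
    by (simp only: qbasis_Suc_shift)
  also have "\<dots> = fps_X * (1 - fps_const a * fps_X)
                      * (\<Sum>n. fps_scale q (fps_const (f $ n) * qbasis a b q n))"
    by (subst fps_mult_suminf[OF order_ge_index_fps_scale[OF order_ge_index_qbasis]])
       (simp add: mult_ac)
  also have "\<dots> = fps_X * (1 - fps_const a * fps_X) * fps_scale q (qbasis_series a b q f)"
    by (simp add: qbasis_series_def fps_scale_suminf order_ge_index_qbasis)
  finally show ?thesis .
qed

context
  fixes a b q :: complex and G :: "nat \<Rightarrow> complex fps"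
  assumes q: "q \<noteq> 0"
    and expansion: "\<And>k. qbasis_series a b q (G k) = fps_X ^ k"
begin

lemma order_ge_index_expansion: "order_ge_index G"
  unfolding order_ge_index_def
proof (intro allI impI)
  fix k m :: nat
  assume "m < k"
  show "G k $ m = 0"
    by (rule qbasis_series_nth_eq_0[where a = a and b = b and q = q])
       (use \<open>m < k\<close> in \<open>simp add: expansion\<close>)
qed

lemma generating_function_q_difference:
  "fps_const (y - a) * (\<Sum>k. fps_const (y ^ k) * G k)
     = fps_const (y - a) + fps_const y * (fps_const b * fps_X - fps_const a * G 1)
       + fps_const ((y - b) * y) * fps_X * fps_scale q (\<Sum>k. fps_const ((y / q) ^ k) * G k)"
  (is "?lhs = ?rhs")
proof -
  let ?L = "qbasis_series a b q"
  define E where "E c = (\<Sum>k. fps_const (c ^ k) * fps_X ^ k :: complex fps)" for c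
  define Gq where "Gq = (\<Sum>k. fps_const ((y / q) ^ k) * G k)"
  have L_generating: "?L (\<Sum>k. fps_const (c ^ k) * G k) = E c" for c
    by (simp add: E_def qbasis_series_suminf order_ge_index_mult_left order_ge_index_expansion
        qbasis_series_const_mult expansion)
  have E_scale: "fps_scale q (E (y / q)) = E y"
    using q by (simp add: E_def fps_scale_suminf order_ge_index_mult_X_power power_divide
        flip: mult.assoc)
  have geometric: "(1 - fps_const y * fps_X) * E y = 1"
    by (simp add: E_def fps_geometric_suminf)
  have L_X: "(1 - fps_const b * fps_X) * ?L fps_X = fps_X * (1 - fps_const a * fps_X)"
    using qbasis_series_shift[of b a q 1] by simp
  have L_shift: "(1 - fps_const b * fps_X) * ?L (fps_X * fps_scale q Gq)
      = fps_X * (1 - fps_const a * fps_X) * E y"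
    by (simp add: qbasis_series_shift Gq_def L_generating E_scale)
  have L_lhs: "?L ?lhs = fps_const (y - a) * E y"
    by (simp add: qbasis_series_const_mult L_generating)
  have L_rhs: "?L ?rhs = fps_const (y - a) + fps_const y * (fps_const b * ?L fps_X - fps_const a * fps_X)
      + fps_const ((y - b) * y) * ?L (fps_X * fps_scale q Gq)"
    by (simp add: qbasis_series_add qbasis_series_diff qbasis_series_const_mult expansion
        mult.assoc Gq_def)
  \<comment> \<open>Under \<open>L\<close> both sides become rational in \<open>z\<close> with denominator
    \<open>(1 - bz)(1 - yz)\<close>.\<close>
  have cancel: "(1 - fps_const b * fps_X) * (1 - fps_const y * fps_X) * ?L ?lhs
      = (1 - fps_const b * fps_X) * (1 - fps_const y * fps_X) * ?L ?rhs"
    unfolding L_lhs L_rhs using geometric L_X L_shift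
    by (simp flip: fps_const_sub fps_const_mult) algebra
  have nonzero: "(1 - fps_const b * fps_X) * (1 - fps_const y * fps_X) \<noteq> (0 :: complex fps)"
    by (intro no_zero_divisors) (auto dest: arg_cong[of _ _ "\<lambda>f. f $ 0"])
  have "?L ?lhs = ?L ?rhs"
    using mult_left_cancel[OF nonzero] cancel by (simp only:)
  then show ?thesis by (simp only: qbasis_series_inject)
qed

end

lemma qpoch_0 [simp]: "qpoch x q 0 = 1"
  by (simp add: qpoch_def)

lemma qpoch_Suc: "qpoch x q (Suc n) = (1 - x) * qpoch (x * q) q n"
  unfolding qpoch_def prod.lessThan_Suc_shift by (simp add: mult.assoc)

lemma qpoch_ratio_Suc:
  assumes "y \<noteq> 0" "y \<noteq> a"
  shows "(y - a) * (qpoch (b / y) q (Suc n) / qpoch (a / y) q (Suc m))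
       = (y - b) * (qpoch (b / (y / q)) q n / qpoch (a / (y / q)) q m)"
proof -
  have ratio: "(y - a) * ((1 - b / y) / (1 - a / y)) = y - b"
    using assms by (simp add: field_simps)
  have "(y - a) * ((1 - b / y) * P / ((1 - a / y) * Q))
      = ((y - a) * ((1 - b / y) / (1 - a / y))) * (P / Q)" for P Q :: complex
    by (simp only: times_divide_times_eq mult.assoc)
  then show ?thesis
    unfolding qpoch_Suc ratio by simp
qed

lemma qpoch_ratio_Suc_monomial:
  assumes q: "q \<noteq> 0" and y: "y \<noteq> 0" "y \<noteq> a"
  shows "(y - a) * (qpoch (b / y) q (Suc n) / qpoch (a / y) q (Suc m) * y ^ Suc n)
       = (y - b) * y * (qpoch (b / (y / q)) q n / qpoch (a / (y / q)) q m * (y / q) ^ n * q ^ n)"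
proof -
  define r where "r = qpoch (b / y) q (Suc n) / qpoch (a / y) q (Suc m)"
  define r' where "r' = qpoch (b / (y / q)) q n / qpoch (a / (y / q)) q m"
  have ratio: "(y - a) * r = (y - b) * r'"
    unfolding r_def r'_def by (rule qpoch_ratio_Suc[OF y])
  have "(y - a) * (r * y ^ Suc n) = ((y - a) * r) * (y * y ^ n)"
    by (simp only: power_Suc mult_ac)
  also have "\<dots> = (y - b) * y * (r' * (y / q) ^ n * q ^ n)"
    using q by (simp add: ratio power_divide)
  finally show ?thesis unfolding r_def r'_def .
qed

lemma qpoch_quotient_sum_q_difference:
  assumes q: "q \<noteq> 0" and y: "y \<noteq> 0" "y \<noteq> a"
  shows "fps_const (y - a) * (\<Sum>n. fps_const (qpoch (b / y) q n / qpoch (a / y) q n * y ^ n) * fps_X ^ n)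
       = fps_const (y - a) + fps_const ((y - b) * y) * fps_X
         * fps_scale q (\<Sum>n. fps_const (qpoch (b / (y / q)) q n / qpoch (a / (y / q)) q n * (y / q) ^ n)
                               * fps_X ^ n)"
proof (subst fps_suminf_q_difference[OF order_ge_index_mult_X_power order_ge_index_mult_X_power])
  fix n
  show "fps_const (y - a)
        * (fps_const (qpoch (b / y) q (Suc n) / qpoch (a / y) q (Suc n) * y ^ Suc n) * fps_X ^ Suc n)
      = fps_const ((y - b) * y) * fps_X * fps_scale q
          (fps_const (qpoch (b / (y / q)) q n / qpoch (a / (y / q)) q n * (y / q) ^ n) * fps_X ^ n)"
    using fps_scale_monomial_step[OF qpoch_ratio_Suc_monomial[OF q y, of b n n], where P = 1]
    by simp
qed simp

lemma scaled_qpoch_quotient_sum_q_difference: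
  assumes q: "q \<noteq> 0" and y: "y \<noteq> 0" "y \<noteq> a"
  shows "fps_const (y - a) * (\<Sum>n. fps_scale (q ^ n) S
             * fps_const (qpoch (b / y) q n / qpoch (a / y) q (Suc n) * y ^ n) * fps_X ^ n)
       = fps_const y * S + fps_const ((y - b) * y) * fps_X
         * fps_scale q (\<Sum>n. fps_scale (q ^ n) S
             * fps_const (qpoch (b / (y / q)) q n / qpoch (a / (y / q)) q (Suc n) * (y / q) ^ n)
             * fps_X ^ n)"
proof -
  have "(y - a) * (1 / (1 - a / y)) = y"
    using y by (simp add: field_simps)
  then have head: "fps_const (y - a) * (S * fps_const (1 / (1 - a / y))) = fps_const y * S"
    by (simp only: mult.left_commute[of _ S] fps_const_mult mult.commute[of _ S])
  show ?thesis
  proof (subst fps_suminf_q_difference[OF order_ge_index_mult_X_power order_ge_index_mult_X_power])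
    fix n
    show "fps_const (y - a) * (fps_scale (q ^ Suc n) S
            * fps_const (qpoch (b / y) q (Suc n) / qpoch (a / y) q (Suc (Suc n)) * y ^ Suc n)
            * fps_X ^ Suc n)
        = fps_const ((y - b) * y) * fps_X * fps_scale q (fps_scale (q ^ n) S
            * fps_const (qpoch (b / (y / q)) q n / qpoch (a / (y / q)) q (Suc n) * (y / q) ^ n)
            * fps_X ^ n)"
      using fps_scale_monomial_step[OF qpoch_ratio_Suc_monomial[OF q y, of b n "Suc n"],
          where P = "fps_scale (q ^ n) S"]
      by (simp add: fps_scale_scale)
  qed (use head in \<open>simp add: qpoch_def\<close>)
qed

definition qpoch_ratio_series ::
    "complex \<Rightarrow> complex \<Rightarrow> complex \<Rightarrow> complex fps \<Rightarrow> complex \<Rightarrow> complex fps" where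
  "qpoch_ratio_series a b q S y =
     (\<Sum>n. fps_const (qpoch (b / y) q n / qpoch (a / y) q n * y ^ n) * fps_X ^ n)
     + (\<Sum>n. fps_scale (q ^ n) S * fps_const (qpoch (b / y) q n / qpoch (a / y) q (Suc n) * y ^ n)
            * fps_X ^ n)"

lemma qpoch_ratio_series_q_difference:
  assumes "q \<noteq> 0" "y \<noteq> 0" "y \<noteq> a"
  shows "fps_const (y - a) * qpoch_ratio_series a b q S y
       = fps_const (y - a) + fps_const y * S
         + fps_const ((y - b) * y) * fps_X * fps_scale q (qpoch_ratio_series a b q S (y / q))"
  unfolding qpoch_ratio_series_def distrib_left fps_scale_add
    qpoch_quotient_sum_q_difference[OF assms] scaled_qpoch_quotient_sum_q_difference[OF assms]
  by (simp add: algebra_simps)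

lemma q_difference_solution_eq_0:
  fixes D :: "'b \<Rightarrow> complex fps"
  assumes closed: "\<And>y. y \<in> A \<Longrightarrow> \<sigma> y \<in> A"
    and nonzero: "\<And>y. y \<in> A \<Longrightarrow> c y \<noteq> 0"
    and eq: "\<And>y. y \<in> A \<Longrightarrow>
               fps_const (c y) * D y = fps_const (e y) * fps_X * fps_scale q (D (\<sigma> y))"
    and "y \<in> A"
  shows "D y = 0"
proof -
  have coeff: "c y * D y $ m = (if m = 0 then 0 else e y * (q ^ (m - 1) * D (\<sigma> y) $ (m - 1)))"
    if "y \<in> A" for y m
    using arg_cong[OF eq[OF that], of "\<lambda>f. f $ m"] by (simp add: mult.assoc)
  have "\<forall>y\<in>A. D y $ m = 0" for m
  proof (induction m)
    case 0
    then show ?case using coeff[of _ 0] nonzero by simp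
  next
    case (Suc m)
    then show ?case using coeff[of _ "Suc m"] nonzero closed by simp
  qed
  then show ?thesis using \<open>y \<in> A\<close> by (simp add: fps_eq_iff)
qed

lemma q_difference_solution_unique:
  fixes X Y :: "'b \<Rightarrow> complex fps"
  assumes closed: "\<And>y. y \<in> A \<Longrightarrow> \<sigma> y \<in> A"
    and nonzero: "\<And>y. y \<in> A \<Longrightarrow> c y \<noteq> 0"
    and X: "\<And>y. y \<in> A \<Longrightarrow>
              fps_const (c y) * X y = F y + fps_const (e y) * fps_X * fps_scale q (X (\<sigma> y))"
    and Y: "\<And>y. y \<in> A \<Longrightarrow>
              fps_const (c y) * Y y = F y + fps_const (e y) * fps_X * fps_scale q (Y (\<sigma> y))"
    and "y \<in> A"
  shows "X y = Y y"
proof -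
  have diff: "fps_const (c y) * (X y - Y y)
      = fps_const (e y) * fps_X * fps_scale q (X (\<sigma> y) - Y (\<sigma> y))" if "y \<in> A" for y
    unfolding right_diff_distrib X[OF that] Y[OF that] fps_scale_diff by (simp add: algebra_simps)
  have "X y - Y y = 0"
    by (rule q_difference_solution_eq_0[where D = "\<lambda>y. X y - Y y",
          OF closed nonzero diff \<open>y \<in> A\<close>])
  then show ?thesis by simp
qed

lemma avoids_q_powers_divide:
  fixes a q y :: complex
  assumes "q \<noteq> 0" "y \<noteq> 0" "\<forall>j::nat. y \<noteq> a * q ^ j"
  shows "y / q \<noteq> 0 \<and> (\<forall>j::nat. y / q \<noteq> a * q ^ j)"
proof -
  have "y \<noteq> a * q ^ j * q" for j
    using assms(3) by (metis mult.assoc power_Suc2)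
  then show ?thesis
    using assms(1,2) by (auto simp: nonzero_divide_eq_eq)
qed

theorem lemma2p2:
  fixes a b q y :: complex
    and B :: "nat \<Rightarrow> nat \<Rightarrow> complex"
    and Gk :: "nat \<Rightarrow> complex fps"
  assumes q: "q \<noteq> 0"
    and B_def: "\<forall>k m. fps_nth (fps_X ^ k :: complex fps) m
                    = (\<Sum>n\<in>{k..m}. B n k * fps_nth (qbasis a b q n) m)"
    and Gk_def: "\<forall>k. Gk k = Abs_fps (\<lambda>n. if k \<le> n then B n k else 0)"
    and y: "y \<noteq> 0" "\<forall>j::nat. y \<noteq> a * q ^ j"
  shows "(\<Sum>k. fps_const (y ^ k) * Gk k)
       = (\<Sum>n. fps_const (qpoch (b / y) q n / qpoch (a / y) q n * y ^ n) * fps_X ^ n)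
       + (\<Sum>n. (fps_const (b * q ^ n) * fps_X - fps_const a * fps_scale (q ^ n) (Gk 1))
               * fps_const (qpoch (b / y) q n / qpoch (a / y) q (Suc n) * y ^ n) * fps_X ^ n)"
proof -
  define S where "S = fps_const b * fps_X - fps_const a * Gk 1"
  define A where "A = {y. y \<noteq> 0 \<and> (\<forall>j::nat. y \<noteq> a * q ^ j)}"
  have expansion: "qbasis_series a b q (Gk k) = fps_X ^ k" for k
    unfolding Gk_def[rule_format] using B_def by (intro qbasis_series_triangular) simp
  have admissible: "y \<noteq> 0" "y \<noteq> a" "y / q \<in> A" if "y \<in> A" for y
  proof -
    from that show "y \<noteq> 0" "y \<noteq> a"
      by (auto simp: A_def dest: spec[of _ 0])
    from that show "y / q \<in> A"
      using avoids_q_powers_divide[OF q] q by (simp add: A_def)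
  qed
  have "(\<Sum>k. fps_const (y ^ k) * Gk k) = qpoch_ratio_series a b q S y"
  proof (rule q_difference_solution_unique[where \<sigma> = "\<lambda>y. y / q" and c = "\<lambda>y. y - a"])
    show "fps_const (y - a) * (\<Sum>k. fps_const (y ^ k) * Gk k) = fps_const (y - a) + fps_const y * S
        + fps_const ((y - b) * y) * fps_X * fps_scale q (\<Sum>k. fps_const ((y / q) ^ k) * Gk k)" for y
      unfolding S_def by (rule generating_function_q_difference[OF q expansion])
    show "fps_const (y - a) * qpoch_ratio_series a b q S y = fps_const (y - a) + fps_const y * S
        + fps_const ((y - b) * y) * fps_X * fps_scale q (qpoch_ratio_series a b q S (y / q))"
      if "y \<in> A" for y
      using admissible[OF that] by (intro qpoch_ratio_series_q_difference q)
    show "y / q \<in> A" "y - a \<noteq> 0" if "y \<in> A" for y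
      using admissible[OF that] by simp_all
  qed (use y in \<open>simp add: A_def\<close>)
  moreover have "fps_const (b * q ^ n) * fps_X - fps_const a * fps_scale (q ^ n) (Gk 1)
      = fps_scale (q ^ n) S" for n
    by (simp add: S_def)
  ultimately show ?thesis by (simp add: qpoch_ratio_series_def)
qed

end
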